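(* Let $F$ be a tract and let $J\subseteq\Delta^r_n$ be an M-convex set that is not of the form $J'+\tau$ with $J'\subseteq\{0,1\}^n$ M-convex and $\tau\in\mathbb Z^n$. If there exists a weak $F$-representation of $J$, then $F$ is near-idempotent. If moreover $\delta^+_{J,i}-\delta^-_{J,i}\ge3$ for some $i\in[n]$, then $F$ is idempotent.
   Context: A tract is a commutative monoid $F$ (written multiplicatively) with an absorbing element $0$ such that $F^\times=F\setminus\{0\}$ is an abelian group, together with a subset $N_F$ of the group semiring $F^+=\mathbb N[F^\times]$ (finite formal sums of elements of $F^\times$; $0$ is the empty sum) which contains $0$, is closed under addition and under multiplication by elements of $F^+$, and such that for every $a\in F$ there is a unique $b\in F$ with $a+b\in N_F$; this $b$ is denoted $-a$. $F$ is idempotent if $1+1\in N_F$ and $1+1+1\in N_F$; near-idempotent if $1+1\in N_F$ (i.e. $-1=1$) and $1+1+x\in N_F$ for some $x\in F^\times$. $\Delta^r_n=\{\alpha\in\mathbb N^n:\sum\alpha_i=r\}$; M-convex: nonempty $J$ such that for $\alpha,\beta\in J$ and $i$ with $\alpha_i<\beta_i$ there is $j$ with $\alpha_j>\beta_j$ and $\alpha+\epsilon_i-\epsilon_j,\beta-\epsilon_i+\epsilon_j\in J$. $\delta^\mp_J$ are the componentwise min/max of $J$; $\bar J=J-\delta^-_J$; $\bar r=r-\sum_i\delta^-_{J,i}$; $\omega_J=\delta^+_J-\delta^-_J$. For $\boldsymbol\beta\in[n]^m$ let $\Sigma\boldsymbol\beta=\epsilon_{\beta_1}+\dots+\epsilon_{\beta_m}$;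 juxtaposition $\boldsymbol\alpha ij$ denotes concatenation of tuples. A weak $F$-representation of $J$ is a function $\rho\colon[n]^{\bar r}\to F$ such that (i) $\rho(\boldsymbol\beta)\ne0$ iff $\Sigma\boldsymbol\beta\in\bar J$; (ii) $\rho(\beta_{\sigma(1)},\dots,\beta_{\sigma(\bar r)})=\mathrm{sign}(\sigma)\rho(\beta_1,\dots,\beta_{\bar r})$ for all $\sigma\in S_{\bar r}$; (iii) $\rho(\boldsymbol\alpha jk)\rho(\boldsymbol\alpha il)-\rho(\boldsymbol\alpha ik)\rho(\boldsymbol\alpha jl)+\rho(\boldsymbol\alpha ij)\rho(\boldsymbol\alpha kl)\in N_F$ for all $\boldsymbol\alpha\in[n]^{\bar r-2}$ and $i,j,k,l\in[n]$ with $\Sigma(\boldsymbol\alpha ijkl)\le\omega_J$. *)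

theory Defs
  imports "HOL-Library.Multiset" "HOL-Combinatorics.Permutations"
begin

text \<open>The group semiring F^+ = N[F^x] is modelled by multisets of nonzero elements
  (the empty multiset being the empty sum 0).\<close>

record 'f tract =
  tmul :: "'f \<Rightarrow> 'f \<Rightarrow> 'f"
  tone :: 'f
  tzero :: 'f
  tnull :: "'f multiset set"

definition tplus :: "'f tract \<Rightarrow> 'f multiset set" where
  "tplus F = {x. set_mset x \<subseteq> - {tzero F}}"

definition temb :: "'f tract \<Rightarrow> 'f \<Rightarrow> 'f multiset" where
  "temb F a = (if a = tzero F then {#} else {#a#})"

definition tsmult :: "'f tract \<Rightarrow> 'f multiset \<Rightarrow> 'f multiset \<Rightarrow> 'f multiset" where
  "tsmult F x y = sum_mset (image_mset (\<lambda>a. image_mset (\<lambda>b. tmul F a b) y) x)"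

definition is_tract :: "'f tract \<Rightarrow> bool" where
  "is_tract F \<longleftrightarrow>
     (\<forall>a b c. tmul F (tmul F a b) c = tmul F a (tmul F b c)) \<and>
     (\<forall>a b. tmul F a b = tmul F b a) \<and>
     (\<forall>a. tmul F (tone F) a = a) \<and>
     (\<forall>a. tmul F (tzero F) a = tzero F) \<and>
     tone F \<noteq> tzero F \<and>
     (\<forall>a b. a \<noteq> tzero F \<longrightarrow> b \<noteq> tzero F \<longrightarrow> tmul F a b \<noteq> tzero F) \<and>
     (\<forall>a. a \<noteq> tzero F \<longrightarrow> (\<exists>b. b \<noteq> tzero F \<and> tmul F a b = tone F)) \<and>
     tnull F \<subseteq> tplus F \<and>
     {#} \<in> tnull F \<and>
     (\<forall>x\<in>tnull F. \<forall>y\<in>tnull F. x + y \<in> tnull F) \<and>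
     (\<forall>x\<in>tplus F. \<forall>y\<in>tnull F. tsmult F x y \<in> tnull F) \<and>
     (\<forall>a. \<exists>!b. temb F a + temb F b \<in> tnull F)"

definition tneg :: "'f tract \<Rightarrow> 'f \<Rightarrow> 'f" where
  "tneg F a = (THE b. temb F a + temb F b \<in> tnull F)"

definition idempotent_tract :: "'f tract \<Rightarrow> bool" where
  "idempotent_tract F \<longleftrightarrow>
     {#tone F, tone F#} \<in> tnull F \<and> {#tone F, tone F, tone F#} \<in> tnull F"

definition near_idempotent_tract :: "'f tract \<Rightarrow> bool" where
  "near_idempotent_tract F \<longleftrightarrow>
     {#tone F, tone F#} \<in> tnull F \<and>
     (\<exists>x. x \<noteq> tzero F \<and> {#tone F, tone F, x#} \<in> tnull F)"

text \<open>Vectors in N^n are functions nat \<Rightarrow> nat vanishing outside [n] = {0..<n}.\<close>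

definition Delta :: "nat \<Rightarrow> nat \<Rightarrow> (nat \<Rightarrow> nat) set" where
  "Delta r n = {\<alpha>. (\<forall>i\<ge>n. \<alpha> i = 0) \<and> (\<Sum>i<n. \<alpha> i) = r}"

definition M_convex :: "nat \<Rightarrow> (nat \<Rightarrow> nat) set \<Rightarrow> bool" where
  "M_convex n J \<longleftrightarrow> J \<noteq> {} \<and>
     (\<forall>\<alpha>\<in>J. \<forall>\<beta>\<in>J. \<forall>i<n. \<alpha> i < \<beta> i \<longrightarrow>
        (\<exists>j<n. \<alpha> j > \<beta> j \<and>
           \<alpha>(i := \<alpha> i + 1, j := \<alpha> j - 1) \<in> J \<and>
           \<beta>(i := \<beta> i - 1, j := \<beta> j + 1) \<in> J))"

definition delta_min :: "(nat \<Rightarrow> nat) set \<Rightarrow> nat \<Rightarrow> nat" where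
  "delta_min J i = Min ((\<lambda>\<alpha>. \<alpha> i) ` J)"

definition delta_max :: "(nat \<Rightarrow> nat) set \<Rightarrow> nat \<Rightarrow> nat" where
  "delta_max J i = Max ((\<lambda>\<alpha>. \<alpha> i) ` J)"

definition Jbar :: "(nat \<Rightarrow> nat) set \<Rightarrow> (nat \<Rightarrow> nat) set" where
  "Jbar J = (\<lambda>\<alpha> i. \<alpha> i - delta_min J i) ` J"

definition rbar :: "nat \<Rightarrow> nat \<Rightarrow> (nat \<Rightarrow> nat) set \<Rightarrow> nat" where
  "rbar r n J = r - (\<Sum>i<n. delta_min J i)"

definition omegaJ :: "(nat \<Rightarrow> nat) set \<Rightarrow> nat \<Rightarrow> nat" where
  "omegaJ J i = delta_max J i - delta_min J i"

definition tuples :: "nat \<Rightarrow> nat \<Rightarrow> nat list set" where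
  "tuples n m = {\<beta>. length \<beta> = m \<and> set \<beta> \<subseteq> {..<n}}"

definition SigmaT :: "nat list \<Rightarrow> nat \<Rightarrow> nat" where
  "SigmaT \<beta> = (\<lambda>i. count (mset \<beta>) i)"

definition sign_act :: "'f tract \<Rightarrow> (nat \<Rightarrow> nat) \<Rightarrow> 'f \<Rightarrow> 'f" where
  "sign_act F \<sigma> x = (if evenperm \<sigma> then x else tmul F (tneg F (tone F)) x)"

definition weak_rep :: "'f tract \<Rightarrow> nat \<Rightarrow> nat \<Rightarrow> (nat \<Rightarrow> nat) set \<Rightarrow> (nat list \<Rightarrow> 'f) \<Rightarrow> bool" where
  "weak_rep F r n J \<rho> \<longleftrightarrow>
     (let m = rbar r n J in
       (\<forall>\<beta>\<in>tuples n m. \<rho> \<beta> \<noteq> tzero F \<longleftrightarrow> SigmaT \<beta> \<in> Jbar J) \<and>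
       (\<forall>\<beta>\<in>tuples n m. \<forall>\<sigma>. \<sigma> permutes {..<m} \<longrightarrow>
          \<rho> (map (\<lambda>k. \<beta> ! \<sigma> k) [0..<m]) = sign_act F \<sigma> (\<rho> \<beta>)) \<and>
       (2 \<le> m \<longrightarrow>
        (\<forall>\<alpha>\<in>tuples n (m - 2). \<forall>i<n. \<forall>j<n. \<forall>k<n. \<forall>l<n.
          SigmaT (\<alpha> @ [i, j, k, l]) \<le> omegaJ J \<longrightarrow>
            temb F (tmul F (\<rho> (\<alpha> @ [j, k])) (\<rho> (\<alpha> @ [i, l])))
          + temb F (tneg F (tmul F (\<rho> (\<alpha> @ [i, k])) (\<rho> (\<alpha> @ [j, l]))))
          + temb F (tmul F (\<rho> (\<alpha> @ [i, j])) (\<rho> (\<alpha> @ [k, l]))) \<in> tnull F)))"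

end

theory Submission
  imports Defs
begin

text \<open>If every coordinate of J varies by at most one, then J is the translate by delta_min J
  of the M-convex 0/1-set Jbar J, which is excluded; so some coordinate i has width at least two.
  Exchanging twice from a member of J that is maximal at i towards one that is minimal at i
  produces a tuple \<alpha> such that \<alpha>ii, \<alpha>ik, \<alpha>il and \<alpha>kl all lie in Jbar J. Then
  \<rho>(\<alpha>ii) is nonzero, yet swapping its last two entries multiplies it by -1, so -1 = 1; the
  Pluecker relation for (i, i, k, l) then reads a + a + b \<in> N_F with a, b nonzero, i.e.
  1 + 1 + b/a \<in> N_F. If coordinate i has width at least three, the same construction started one
  step below the maximum gives \<alpha>ii and \<alpha>il in Jbar J, and the relation for (i, i, i, l)
  reads c + c + c \<in> N_F.\<close>

definition tuple_of :: "nat \<Rightarrow> (nat \<Rightarrow> nat) \<Rightarrow> nat list" where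
  "tuple_of n g = concat (map (\<lambda>j. replicate (g j) j) [0..<n])"

lemma tuple_of_Suc: "tuple_of (Suc n) g = tuple_of n g @ replicate (g n) n"
  by (simp add: tuple_of_def)

lemma length_tuple_of: "length (tuple_of n g) = (\<Sum>j<n. g j)"
  by (induction n) (simp_all add: tuple_of_Suc, simp add: tuple_of_def)

lemma set_tuple_of: "set (tuple_of n g) \<subseteq> {..<n}"
  by (induction n) (auto simp: tuple_of_Suc tuple_of_def)

lemma SigmaT_tuple_of_append:
  assumes "\<forall>j\<ge>n. g j = 0"
  shows "SigmaT (tuple_of n g @ xs) t = g t + SigmaT xs t"
proof -
  have "count (mset (tuple_of n g)) t = (if t < n then g t else 0)"
    by (induction n) (auto simp: tuple_of_Suc tuple_of_def)
  then show ?thesis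
    using assms by (simp add: SigmaT_def)
qed

lemma finite_Delta: "finite (Delta r n)"
proof (rule finite_subset)
  show "Delta r n \<subseteq> {f. \<forall>i. (i \<in> {..<n} \<longrightarrow> f i \<in> {..r}) \<and> (i \<notin> {..<n} \<longrightarrow> f i = 0)}"
    by (auto simp: Delta_def intro: order.trans[OF member_le_sum[of _ "{..<n}"]])
qed (intro finite_set_of_finite_funs; simp)

lemma delta_min_le: "finite J \<Longrightarrow> \<beta> \<in> J \<Longrightarrow> delta_min J i \<le> \<beta> i"
  by (simp add: delta_min_def)

lemma delta_max_ge: "finite J \<Longrightarrow> \<beta> \<in> J \<Longrightarrow> \<beta> i \<le> delta_max J i"
  by (simp add: delta_max_def)

lemma delta_min_attained:
  assumes "finite J" "J \<noteq> {}"
  obtains \<beta> where "\<beta> \<in> J" "\<beta> i = delta_min J i"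
  using Min_in[of "(\<lambda>\<alpha>. \<alpha> i) ` J"] assms unfolding delta_min_def by fastforce

lemma delta_max_attained:
  assumes "finite J" "J \<noteq> {}"
  obtains \<beta> where "\<beta> \<in> J" "\<beta> i = delta_max J i"
  using Max_in[of "(\<lambda>\<alpha>. \<alpha> i) ` J"] assms unfolding delta_max_def by fastforce

lemma M_convex_exchangeE:
  assumes "M_convex n J" "\<alpha> \<in> J" "\<beta> \<in> J" "i < n" "\<alpha> i < \<beta> i"
  obtains j where "j < n" "\<beta> j < \<alpha> j"
    "\<alpha>(i := \<alpha> i + 1, j := \<alpha> j - 1) \<in> J" "\<beta>(i := \<beta> i - 1, j := \<beta> j + 1) \<in> J"
  using assms unfolding M_convex_def by blast

lemma Jbar_memberI: "\<beta> \<in> J \<Longrightarrow> (\<And>t. v t = \<beta> t - delta_min J t) \<Longrightarrow> v \<in> Jbar J"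
  unfolding Jbar_def by (rule image_eqI[of _ _ \<beta>]) auto

lemma Jbar_memberE:
  assumes "v \<in> Jbar J"
  obtains \<beta> where "\<beta> \<in> J" "v = (\<lambda>t. \<beta> t - delta_min J t)"
  using assms unfolding Jbar_def by blast

lemma M_convex_Jbar:
  assumes fin: "finite J" and conv: "M_convex n J"
  shows "M_convex n (Jbar J)"
  unfolding M_convex_def
proof (intro conjI ballI allI impI)
  show "Jbar J \<noteq> {}"
    using conv by (simp add: Jbar_def M_convex_def)
next
  fix a b i assume a: "a \<in> Jbar J" and b: "b \<in> Jbar J" and i: "i < n" and ab: "a i < b i"
  obtain \<alpha> where \<alpha>: "\<alpha> \<in> J" and a_eq: "a = (\<lambda>t. \<alpha> t - delta_min J t)"
    using a by (rule Jbar_memberE)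
  obtain \<beta> where \<beta>: "\<beta> \<in> J" and b_eq: "b = (\<lambda>t. \<beta> t - delta_min J t)"
    using b by (rule Jbar_memberE)
  have "\<alpha> i < \<beta> i"
    using ab delta_min_le[OF fin \<beta>, of i] by (auto simp: a_eq b_eq)
  then obtain j where j: "j < n" "\<beta> j < \<alpha> j"
    and J1: "\<alpha>(i := \<alpha> i + 1, j := \<alpha> j - 1) \<in> J" and J2: "\<beta>(i := \<beta> i - 1, j := \<beta> j + 1) \<in> J"
    using M_convex_exchangeE[OF conv \<alpha> \<beta> i] by blast
  have "i \<noteq> j"
    using j \<open>\<alpha> i < \<beta> i\<close> by auto
  show "\<exists>j<n. b j < a j \<and> a(i := a i + 1, j := a j - 1) \<in> Jbar J \<and> b(i := b i - 1, j := b j + 1) \<in> Jbar J"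
  proof (intro exI conjI)
    show "b j < a j"
      using j delta_min_le[OF fin \<beta>, of j] by (simp add: a_eq b_eq diff_less_mono)
    show "a(i := a i + 1, j := a j - 1) \<in> Jbar J"
      by (rule Jbar_memberI[OF J1]) (use \<open>i \<noteq> j\<close> delta_min_le[OF fin \<alpha>, of i] in \<open>auto simp: a_eq\<close>)
    show "b(i := b i - 1, j := b j + 1) \<in> Jbar J"
      by (rule Jbar_memberI[OF J2]) (use \<open>i \<noteq> j\<close> delta_min_le[OF fin \<beta>, of j] in \<open>auto simp: b_eq\<close>)
  qed fact
qed

lemma exists_wide_coordinate:
  assumes J: "J \<subseteq> Delta r n" and conv: "M_convex n J"
    and not_translate: "\<not> (\<exists>J' (\<tau> :: nat \<Rightarrow> int).
             J' \<subseteq> {\<alpha>. \<forall>i. \<alpha> i \<le> 1 \<and> (i \<ge> n \<longrightarrow> \<alpha> i = 0)} \<and> M_convex n J' \<and>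
             (\<forall>i\<ge>n. \<tau> i = 0) \<and>
             (\<lambda>\<alpha> i. int (\<alpha> i)) ` J = (\<lambda>\<alpha> i. int (\<alpha> i) + \<tau> i) ` J')"
  obtains i where "i < n" "delta_min J i + 2 \<le> delta_max J i"
proof (rule ccontr)
  assume "\<not> thesis"
  then have narrow: "\<forall>i<n. delta_max J i \<le> delta_min J i + 1"
    using that by force
  have fin: "finite J"
    using finite_Delta J by (rule rev_finite_subset)
  have zero: "\<beta> i = 0" if "\<beta> \<in> J" "n \<le> i" for \<beta> i
    using J that by (auto simp: Delta_def)
  define \<tau> :: "nat \<Rightarrow> int" where "\<tau> i = int (delta_min J i)" for i
  have "Jbar J \<subseteq> {\<alpha>. \<forall>i. \<alpha> i \<le> 1 \<and> (i \<ge> n \<longrightarrow> \<alpha> i = 0)}"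
  proof
    fix v assume "v \<in> Jbar J"
    then obtain \<beta> where \<beta>: "\<beta> \<in> J" and v: "v = (\<lambda>t. \<beta> t - delta_min J t)"
      by (rule Jbar_memberE)
    have "\<beta> i - delta_min J i \<le> 1" for i
      using narrow delta_max_ge[OF fin \<beta>, of i] zero[OF \<beta>, of i] by (cases "i < n") auto
    then show "v \<in> {\<alpha>. \<forall>i. \<alpha> i \<le> 1 \<and> (i \<ge> n \<longrightarrow> \<alpha> i = 0)}"
      using zero[OF \<beta>] by (auto simp: v)
  qed
  moreover have "\<tau> i = 0" if "n \<le> i" for i
  proof -
    obtain \<beta> where "\<beta> \<in> J"
      using conv by (auto simp: M_convex_def)
    then show ?thesis
      using delta_min_le[OF fin, of \<beta> i] zero[of \<beta> i] that by (simp add: \<tau>_def)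
  qed
  moreover have "(\<lambda>\<alpha> i. int (\<alpha> i)) ` J = (\<lambda>\<alpha> i. int (\<alpha> i) + \<tau> i) ` Jbar J"
    unfolding Jbar_def image_image
    by (rule image_cong[OF refl]) (simp add: fun_eq_iff \<tau>_def delta_min_le[OF fin])
  ultimately show False
    using not_translate M_convex_Jbar[OF fin conv] by blast
qed

definition plus_Sigma :: "(nat \<Rightarrow> nat) \<Rightarrow> nat list \<Rightarrow> nat \<Rightarrow> nat" where
  "plus_Sigma \<delta> xs t = \<delta> t + SigmaT xs t"

lemma M_convex_exchange_square:
  assumes fin: "finite J" and conv: "M_convex n J" and i: "i < n"
    and wide: "delta_min J i + 2 \<le> delta_max J i"
  obtains \<delta> k l where "k < n" "l < n" "\<forall>t. delta_min J t \<le> \<delta> t"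
    "plus_Sigma \<delta> [i, i] \<in> J" "plus_Sigma \<delta> [i, k] \<in> J" "plus_Sigma \<delta> [i, l] \<in> J"
    "plus_Sigma \<delta> [k, l] \<in> J" "\<forall>t. plus_Sigma \<delta> [i, i, k, l] t \<le> delta_max J t"
proof -
  have "J \<noteq> {}"
    using conv by (simp add: M_convex_def)
  then obtain \<beta>M \<beta>m where \<beta>M: "\<beta>M \<in> J" "\<beta>M i = delta_max J i" and \<beta>m: "\<beta>m \<in> J" "\<beta>m i = delta_min J i"
    using delta_max_attained delta_min_attained fin by metis
  have two: "2 \<le> \<beta>M i"
    using \<beta>M wide by simp
  have "\<beta>m i < \<beta>M i"
    using \<beta>M \<beta>m wide by simp
  then obtain k where k: "k < n" "\<beta>M k < \<beta>m k"
    and \<beta>1: "\<beta>M(i := \<beta>M i - 1, k := \<beta>M k + 1) \<in> J" (is "?\<beta>1 \<in> J")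
    by (rule M_convex_exchangeE[OF conv \<beta>m(1) \<beta>M(1) i])
  have "k \<noteq> i"
    using k \<open>\<beta>m i < \<beta>M i\<close> by auto
  have "\<beta>m i < ?\<beta>1 i"
    using \<beta>M \<beta>m wide \<open>k \<noteq> i\<close> by simp
  then obtain l where l: "l < n" "?\<beta>1 l < \<beta>m l"
    and \<beta>2: "?\<beta>1(i := ?\<beta>1 i - 1, l := ?\<beta>1 l + 1) \<in> J" (is "?\<beta>2 \<in> J")
    by (rule M_convex_exchangeE[OF conv \<beta>m(1) \<beta>1 i])
  have "l \<noteq> i"
    using l \<open>\<beta>m i < ?\<beta>1 i\<close> by auto
  have "?\<beta>2 i < \<beta>M i"
    using \<beta>M \<beta>m wide \<open>k \<noteq> i\<close> \<open>l \<noteq> i\<close> by simp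
  then obtain j where j: "\<beta>M j < ?\<beta>2 j"
    and \<beta>3M: "\<beta>M(i := \<beta>M i - 1, j := \<beta>M j + 1) \<in> J"
    and \<beta>32: "?\<beta>2(i := ?\<beta>2 i + 1, j := ?\<beta>2 j - 1) \<in> J"
    by (rule M_convex_exchangeE[OF conv \<beta>2 \<beta>M(1) i])
  have \<beta>3: "\<beta>M(i := \<beta>M i - 1, l := \<beta>M l + 1) \<in> J"
  proof (cases "j = l")
    case True
    then show ?thesis using \<beta>3M by simp
  next
    case False
    \<comment> \<open>only the coordinates k and l of the second exchange exceed those of the maximiser\<close>
    then have "j = k"
      using j by (auto split: if_splits)
    then have "?\<beta>2(i := ?\<beta>2 i + 1, j := ?\<beta>2 j - 1) = \<beta>M(i := \<beta>M i - 1, l := \<beta>M l + 1)"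
      using False two \<open>k \<noteq> i\<close> \<open>l \<noteq> i\<close> by (auto simp: fun_eq_iff)
    then show ?thesis using \<beta>32 by simp
  qed
  define \<delta> where "\<delta> = \<beta>M(i := \<beta>M i - 2)"
  have "plus_Sigma \<delta> [i, i] = \<beta>M" "plus_Sigma \<delta> [i, k] = ?\<beta>1"
    "plus_Sigma \<delta> [i, l] = \<beta>M(i := \<beta>M i - 1, l := \<beta>M l + 1)" "plus_Sigma \<delta> [k, l] = ?\<beta>2"
    using two \<open>k \<noteq> i\<close> \<open>l \<noteq> i\<close> by (auto simp: fun_eq_iff plus_Sigma_def SigmaT_def \<delta>_def)
  moreover have "\<forall>t. plus_Sigma \<delta> [i, i, k, l] t \<le> delta_max J t"
  proof
    fix t
    show "plus_Sigma \<delta> [i, i, k, l] t \<le> delta_max J t"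
      using k(2) l(2) two \<beta>M(2) \<open>k \<noteq> i\<close> \<open>l \<noteq> i\<close> delta_max_ge[OF fin \<beta>m(1), of t] delta_max_ge[OF fin \<beta>M(1), of t]
      by (auto simp: plus_Sigma_def SigmaT_def \<delta>_def)
  qed
  moreover have "\<forall>t. delta_min J t \<le> \<delta> t"
    using delta_min_le[OF fin \<beta>M(1)] \<beta>M wide by (simp add: \<delta>_def)
  ultimately show thesis
    using that k(1) l(1) \<beta>M(1) \<beta>1 \<beta>2 \<beta>3 by metis
qed

lemma M_convex_exchange_triple:
  assumes fin: "finite J" and conv: "M_convex n J" and i: "i < n"
    and wide: "delta_min J i + 3 \<le> delta_max J i"
  obtains \<delta> l where "l < n" "\<forall>t. delta_min J t \<le> \<delta> t"
    "plus_Sigma \<delta> [i, i] \<in> J" "plus_Sigma \<delta> [i, l] \<in> J"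
    "\<forall>t. plus_Sigma \<delta> [i, i, i, l] t \<le> delta_max J t"
proof -
  have "J \<noteq> {}"
    using conv by (simp add: M_convex_def)
  then obtain \<beta>M \<beta>m where \<beta>M: "\<beta>M \<in> J" "\<beta>M i = delta_max J i" and \<beta>m: "\<beta>m \<in> J" "\<beta>m i = delta_min J i"
    using delta_max_attained delta_min_attained fin by metis
  have three: "3 \<le> \<beta>M i"
    using \<beta>M wide by simp
  have "\<beta>m i < \<beta>M i"
    using \<beta>M \<beta>m wide by simp
  then obtain k where k: "\<beta>M k < \<beta>m k"
    and \<beta>1: "\<beta>M(i := \<beta>M i - 1, k := \<beta>M k + 1) \<in> J" (is "?\<beta>1 \<in> J")
    by (rule M_convex_exchangeE[OF conv \<beta>m(1) \<beta>M(1) i])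
  have "k \<noteq> i"
    using k \<open>\<beta>m i < \<beta>M i\<close> by auto
  have "\<beta>m i < ?\<beta>1 i"
    using \<beta>M \<beta>m wide \<open>k \<noteq> i\<close> by simp
  then obtain l where l: "l < n" "?\<beta>1 l < \<beta>m l"
    and \<beta>2: "?\<beta>1(i := ?\<beta>1 i - 1, l := ?\<beta>1 l + 1) \<in> J"
    by (rule M_convex_exchangeE[OF conv \<beta>m(1) \<beta>1 i])
  have "l \<noteq> i"
    using l \<open>\<beta>m i < ?\<beta>1 i\<close> by auto
  define \<delta> where "\<delta> = ?\<beta>1(i := \<beta>M i - 3)"
  have "plus_Sigma \<delta> [i, i] = ?\<beta>1" "plus_Sigma \<delta> [i, l] = ?\<beta>1(i := ?\<beta>1 i - 1, l := ?\<beta>1 l + 1)"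
    using three \<open>k \<noteq> i\<close> \<open>l \<noteq> i\<close> by (auto simp: fun_eq_iff plus_Sigma_def SigmaT_def \<delta>_def)
  moreover have "\<forall>t. plus_Sigma \<delta> [i, i, i, l] t \<le> delta_max J t"
  proof
    fix t
    show "plus_Sigma \<delta> [i, i, i, l] t \<le> delta_max J t"
      using l(2) three \<beta>M(2) \<open>k \<noteq> i\<close> \<open>l \<noteq> i\<close> delta_max_ge[OF fin \<beta>m(1), of t] delta_max_ge[OF fin \<beta>1, of t]
      by (auto simp: plus_Sigma_def SigmaT_def \<delta>_def)
  qed
  moreover have "\<forall>t. delta_min J t \<le> \<delta> t"
    using delta_min_le[OF fin \<beta>M(1)] \<beta>M wide by (auto simp: \<delta>_def le_SucI)
  ultimately show thesis
    using that l(1) \<beta>1 \<beta>2 by metis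
qed

lemma Jbar_tuple_realization:
  assumes J: "J \<subseteq> Delta r n" and low: "\<forall>t. delta_min J t \<le> \<delta> t" and ab: "a < n" "b < n"
    and mem: "plus_Sigma \<delta> [a, b] \<in> J"
  obtains \<alpha> where "\<alpha> \<in> tuples n (rbar r n J - 2)" "2 \<le> rbar r n J"
    "\<And>xs. plus_Sigma \<delta> xs \<in> J \<Longrightarrow> SigmaT (\<alpha> @ xs) \<in> Jbar J"
    "\<And>xs. \<forall>t. plus_Sigma \<delta> xs t \<le> delta_max J t \<Longrightarrow> SigmaT (\<alpha> @ xs) \<le> omegaJ J"
proof -
  have fin: "finite J"
    using finite_Delta J by (rule rev_finite_subset)
  define g where "g t = \<delta> t - delta_min J t" for t
  have "\<forall>t\<ge>n. g t = 0"
    using J mem by (auto simp: g_def Delta_def plus_Sigma_def)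
  then have Sigma: "SigmaT (tuple_of n g @ xs) = (\<lambda>t. plus_Sigma \<delta> xs t - delta_min J t)" for xs
    using SigmaT_tuple_of_append low by (simp add: fun_eq_iff g_def plus_Sigma_def)
  have "SigmaT [a, b] = (\<lambda>t. (if t = a then 1 else 0) + (if t = b then 1 else 0))"
    by (simp add: SigmaT_def fun_eq_iff)
  then have "(\<Sum>t<n. g t) + 2 = (\<Sum>t<n. g t + SigmaT [a, b] t)"
    using ab by (simp add: sum.distrib)
  also have "\<dots> = (\<Sum>t<n. plus_Sigma \<delta> [a, b] t - delta_min J t)"
    using low by (simp add: g_def plus_Sigma_def)
  also have "\<dots> = (\<Sum>t<n. plus_Sigma \<delta> [a, b] t) - (\<Sum>t<n. delta_min J t)"
    using delta_min_le[OF fin mem] by (simp add: sum_subtractf_nat)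
  also have "\<dots> = rbar r n J"
    using J mem by (auto simp: Delta_def rbar_def)
  finally have sum_g: "(\<Sum>t<n. g t) + 2 = rbar r n J" .
  show thesis
  proof (rule that[of "tuple_of n g"])
    show "tuple_of n g \<in> tuples n (rbar r n J - 2)"
      using sum_g set_tuple_of by (auto simp: tuples_def length_tuple_of)
    show "2 \<le> rbar r n J"
      using sum_g by simp
    show "SigmaT (tuple_of n g @ xs) \<in> Jbar J" if "plus_Sigma \<delta> xs \<in> J" for xs
      using that by (rule Jbar_memberI) (simp add: Sigma)
    show "SigmaT (tuple_of n g @ xs) \<le> omegaJ J" if "\<forall>t. plus_Sigma \<delta> xs t \<le> delta_max J t" for xs
      using that by (simp add: Sigma le_fun_def omegaJ_def diff_le_mono)
  qed
qed

lemma tuples_append_pair: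
  "\<alpha> \<in> tuples n (m - 2) \<Longrightarrow> 2 \<le> m \<Longrightarrow> a < n \<Longrightarrow> b < n \<Longrightarrow> \<alpha> @ [a, b] \<in> tuples n m"
  by (auto simp: tuples_def)

lemma weak_rep_nonzero:
  "weak_rep F r n J \<rho> \<Longrightarrow> \<beta> \<in> tuples n (rbar r n J) \<Longrightarrow> SigmaT \<beta> \<in> Jbar J \<Longrightarrow> \<rho> \<beta> \<noteq> tzero F"
  by (simp add: weak_rep_def Let_def)

lemma weak_rep_alternating:
  "weak_rep F r n J \<rho> \<Longrightarrow> \<beta> \<in> tuples n (rbar r n J) \<Longrightarrow> \<sigma> permutes {..<rbar r n J} \<Longrightarrow>
    \<rho> (map (\<lambda>k. \<beta> ! \<sigma> k) [0..<rbar r n J]) = sign_act F \<sigma> (\<rho> \<beta>)"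
  by (simp add: weak_rep_def Let_def)

lemma weak_rep_plucker:
  assumes "weak_rep F r n J \<rho>" "2 \<le> rbar r n J" "\<alpha> \<in> tuples n (rbar r n J - 2)"
    "i < n" "j < n" "k < n" "l < n" "SigmaT (\<alpha> @ [i, j, k, l]) \<le> omegaJ J"
  shows "temb F (tmul F (\<rho> (\<alpha> @ [j, k])) (\<rho> (\<alpha> @ [i, l])))
       + temb F (tneg F (tmul F (\<rho> (\<alpha> @ [i, k])) (\<rho> (\<alpha> @ [j, l]))))
       + temb F (tmul F (\<rho> (\<alpha> @ [i, j])) (\<rho> (\<alpha> @ [k, l]))) \<in> tnull F"
  using assms unfolding weak_rep_def Let_def by blast

context
  fixes F :: "'f tract"
  assumes tract: "is_tract F"
begin

lemma tneg_ex1: "\<exists>!b. temb F a + temb F b \<in> tnull F"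
  using tract unfolding is_tract_def by blast

lemma tneg_unique: "temb F a + temb F b \<in> tnull F \<Longrightarrow> tneg F a = b"
  unfolding tneg_def by (rule the1_equality[OF tneg_ex1])

lemma tneg_null: "temb F a + temb F (tneg F a) \<in> tnull F"
  unfolding tneg_def by (rule theI'[OF tneg_ex1])

lemma tmul_commute: "tmul F a b = tmul F b a"
  using tract unfolding is_tract_def by blast

lemma tmul_assoc: "tmul F (tmul F a b) c = tmul F a (tmul F b c)"
  using tract unfolding is_tract_def by blast

lemma tmul_one_right: "tmul F a (tone F) = a"
  using tract tmul_commute unfolding is_tract_def by metis

lemma tone_nonzero: "tone F \<noteq> tzero F"
  using tract unfolding is_tract_def by blast

lemma tmul_nonzero: "a \<noteq> tzero F \<Longrightarrow> b \<noteq> tzero F \<Longrightarrow> tmul F a b \<noteq> tzero F"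
  using tract unfolding is_tract_def by blast

lemma tract_inverseE:
  assumes "a \<noteq> tzero F"
  obtains b where "b \<noteq> tzero F" "tmul F b a = tone F"
  using tract assms tmul_commute unfolding is_tract_def by metis

lemma tnull_scale:
  assumes "c \<noteq> tzero F" "M \<in> tnull F"
  shows "image_mset (tmul F c) M \<in> tnull F"
proof -
  have "{#c#} \<in> tplus F"
    using assms(1) by (simp add: tplus_def)
  then have "tsmult F {#c#} M \<in> tnull F"
    using tract assms(2) unfolding is_tract_def by blast
  then show ?thesis
    by (simp add: tsmult_def)
qed

lemma one_plus_one_nullI:
  assumes "x \<noteq> tzero F" "tmul F (tneg F (tone F)) x = x"
  shows "{#tone F, tone F#} \<in> tnull F"
proof -
  obtain y where "tmul F x y = tone F"
    using tract_inverseE[OF assms(1)] tmul_commute by metis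
  then have "tneg F (tone F) = tone F"
    using assms(2) by (metis tmul_assoc tmul_one_right)
  then show ?thesis
    using tneg_null[of "tone F"] tone_nonzero by (simp add: temb_def)
qed

lemma tneg_eq_self:
  assumes "{#tone F, tone F#} \<in> tnull F" "a \<noteq> tzero F"
  shows "tneg F a = a"
proof (rule tneg_unique)
  show "temb F a + temb F a \<in> tnull F"
    using tnull_scale[OF assms(2,1)] assms(2) by (simp add: temb_def tmul_one_right)
qed

lemma near_idempotentI:
  assumes two: "{#tone F, tone F#} \<in> tnull F" and a: "a \<noteq> tzero F" and b: "b \<noteq> tzero F"
    and null: "temb F a + temb F (tneg F a) + temb F b \<in> tnull F"
  shows "near_idempotent_tract F"
proof -
  obtain a' where a': "a' \<noteq> tzero F" "tmul F a' a = tone F"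
    using tract_inverseE[OF a] .
  have "{#a, a, b#} \<in> tnull F"
    using null tneg_eq_self[OF two a] a b by (simp add: temb_def add_mset_commute)
  then have "{#tone F, tone F, tmul F a' b#} \<in> tnull F"
    using tnull_scale[OF a'(1)] a'(2) by fastforce
  then show ?thesis
    using two tmul_nonzero[OF a'(1) b] unfolding near_idempotent_tract_def by blast
qed

lemma idempotentI:
  assumes two: "{#tone F, tone F#} \<in> tnull F" and c: "c \<noteq> tzero F"
    and null: "temb F c + temb F (tneg F c) + temb F c \<in> tnull F"
  shows "idempotent_tract F"
proof -
  obtain c' where c': "c' \<noteq> tzero F" "tmul F c' c = tone F"
    using tract_inverseE[OF c] .
  have "{#c, c, c#} \<in> tnull F"
    using null tneg_eq_self[OF two c] c by (simp add: temb_def)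
  then have "{#tone F, tone F, tone F#} \<in> tnull F"
    using tnull_scale[OF c'(1)] c'(2) by fastforce
  then show ?thesis
    using two unfolding idempotent_tract_def by blast
qed

lemma weak_rep_repeated_entry:
  assumes \<rho>: "weak_rep F r n J \<rho>" and \<beta>: "\<beta> \<in> tuples n (rbar r n J)"
    and pq: "p < rbar r n J" "q < rbar r n J" "p \<noteq> q" "\<beta> ! p = \<beta> ! q"
    and nonzero: "\<rho> \<beta> \<noteq> tzero F"
  shows "{#tone F, tone F#} \<in> tnull F"
proof -
  let ?\<sigma> = "Transposition.transpose p q"
  have "?\<sigma> permutes {..<rbar r n J}"
    using pq by (intro permutes_swap_id) auto
  moreover have "map (\<lambda>k. \<beta> ! ?\<sigma> k) [0..<rbar r n J] = \<beta>"
    using \<beta> pq by (intro nth_equalityI) (auto simp: tuples_def Transposition.transpose_def)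
  ultimately have "\<rho> \<beta> = sign_act F ?\<sigma> (\<rho> \<beta>)"
    using weak_rep_alternating[OF \<rho> \<beta>] by metis
  then have "tmul F (tneg F (tone F)) (\<rho> \<beta>) = \<rho> \<beta>"
    using pq by (simp add: sign_act_def evenperm_swap)
  then show ?thesis
    using one_plus_one_nullI nonzero by blast
qed

lemma weak_rep_one_plus_one:
  assumes \<rho>: "weak_rep F r n J \<rho>" and \<alpha>: "\<alpha> \<in> tuples n (rbar r n J - 2)" "2 \<le> rbar r n J"
    and i: "i < n" and ii: "SigmaT (\<alpha> @ [i, i]) \<in> Jbar J"
  shows "{#tone F, tone F#} \<in> tnull F"
proof (rule weak_rep_repeated_entry)
  show \<alpha>ii: "\<alpha> @ [i, i] \<in> tuples n (rbar r n J)"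
    using \<alpha> i i by (rule tuples_append_pair)
  show "\<rho> (\<alpha> @ [i, i]) \<noteq> tzero F"
    using \<rho> \<alpha>ii ii by (rule weak_rep_nonzero)
  show "(\<alpha> @ [i, i]) ! (rbar r n J - 2) = (\<alpha> @ [i, i]) ! (rbar r n J - 1)"
    using \<alpha> by (auto simp: tuples_def nth_append)
qed (use \<rho> \<alpha> in auto)

lemma weak_rep_wide_coordinate_near_idempotent:
  assumes \<rho>: "weak_rep F r n J \<rho>" and J: "J \<subseteq> Delta r n" and conv: "M_convex n J"
    and i: "i < n" and wide: "delta_min J i + 2 \<le> delta_max J i"
  shows "near_idempotent_tract F"
proof -
  have fin: "finite J"
    using finite_Delta J by (rule rev_finite_subset)
  obtain \<delta> k l where kl: "k < n" "l < n" and low: "\<forall>t. delta_min J t \<le> \<delta> t"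
    and mem: "plus_Sigma \<delta> [i, i] \<in> J" "plus_Sigma \<delta> [i, k] \<in> J" "plus_Sigma \<delta> [i, l] \<in> J"
      "plus_Sigma \<delta> [k, l] \<in> J"
    and bound: "\<forall>t. plus_Sigma \<delta> [i, i, k, l] t \<le> delta_max J t"
    by (rule M_convex_exchange_square[OF fin conv i wide])
  obtain \<alpha> where \<alpha>: "\<alpha> \<in> tuples n (rbar r n J - 2)" "2 \<le> rbar r n J"
    and Jbar: "\<And>xs. plus_Sigma \<delta> xs \<in> J \<Longrightarrow> SigmaT (\<alpha> @ xs) \<in> Jbar J"
    and omega: "\<And>xs. \<forall>t. plus_Sigma \<delta> xs t \<le> delta_max J t \<Longrightarrow> SigmaT (\<alpha> @ xs) \<le> omegaJ J"
    using Jbar_tuple_realization[OF J low i i mem(1)] by blast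
  have nonzero: "\<rho> (\<alpha> @ [a, b]) \<noteq> tzero F" if "a < n" "b < n" "plus_Sigma \<delta> [a, b] \<in> J" for a b
    using \<rho> tuples_append_pair[OF \<alpha> that(1,2)] Jbar[OF that(3)] by (rule weak_rep_nonzero)
  have two: "{#tone F, tone F#} \<in> tnull F"
    using \<rho> \<alpha> i Jbar[OF mem(1)] by (rule weak_rep_one_plus_one)
  let ?a = "tmul F (\<rho> (\<alpha> @ [i, k])) (\<rho> (\<alpha> @ [i, l]))"
  let ?b = "tmul F (\<rho> (\<alpha> @ [i, i])) (\<rho> (\<alpha> @ [k, l]))"
  have "temb F ?a + temb F (tneg F ?a) + temb F ?b \<in> tnull F"
    using weak_rep_plucker[OF \<rho> \<alpha>(2,1) i i kl omega[OF bound]] .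
  moreover have "?a \<noteq> tzero F"
    using i kl mem by (intro tmul_nonzero nonzero)
  moreover have "?b \<noteq> tzero F"
    using i kl mem by (intro tmul_nonzero nonzero)
  ultimately show ?thesis
    using two near_idempotentI by blast
qed

lemma weak_rep_wide_coordinate_idempotent:
  assumes \<rho>: "weak_rep F r n J \<rho>" and J: "J \<subseteq> Delta r n" and conv: "M_convex n J"
    and i: "i < n" and wide: "delta_min J i + 3 \<le> delta_max J i"
  shows "idempotent_tract F"
proof -
  have fin: "finite J"
    using finite_Delta J by (rule rev_finite_subset)
  obtain \<delta> l where l: "l < n" and low: "\<forall>t. delta_min J t \<le> \<delta> t"
    and mem: "plus_Sigma \<delta> [i, i] \<in> J" "plus_Sigma \<delta> [i, l] \<in> J"
    and bound: "\<forall>t. plus_Sigma \<delta> [i, i, i, l] t \<le> delta_max J t"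
    by (rule M_convex_exchange_triple[OF fin conv i wide])
  obtain \<alpha> where \<alpha>: "\<alpha> \<in> tuples n (rbar r n J - 2)" "2 \<le> rbar r n J"
    and Jbar: "\<And>xs. plus_Sigma \<delta> xs \<in> J \<Longrightarrow> SigmaT (\<alpha> @ xs) \<in> Jbar J"
    and omega: "\<And>xs. \<forall>t. plus_Sigma \<delta> xs t \<le> delta_max J t \<Longrightarrow> SigmaT (\<alpha> @ xs) \<le> omegaJ J"
    using Jbar_tuple_realization[OF J low i i mem(1)] by blast
  have nonzero: "\<rho> (\<alpha> @ [a, b]) \<noteq> tzero F" if "a < n" "b < n" "plus_Sigma \<delta> [a, b] \<in> J" for a b
    using \<rho> tuples_append_pair[OF \<alpha> that(1,2)] Jbar[OF that(3)] by (rule weak_rep_nonzero)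
  have two: "{#tone F, tone F#} \<in> tnull F"
    using \<rho> \<alpha> i Jbar[OF mem(1)] by (rule weak_rep_one_plus_one)
  let ?c = "tmul F (\<rho> (\<alpha> @ [i, i])) (\<rho> (\<alpha> @ [i, l]))"
  have "temb F ?c + temb F (tneg F ?c) + temb F ?c \<in> tnull F"
    using weak_rep_plucker[OF \<rho> \<alpha>(2,1) i i i l omega[OF bound]] .
  moreover have "?c \<noteq> tzero F"
    using i l mem by (intro tmul_nonzero nonzero)
  ultimately show ?thesis
    using two idempotentI by blast
qed

end

theorem propositionC:
  fixes F :: "'f tract" and r n :: nat and J :: "(nat \<Rightarrow> nat) set"
  assumes "is_tract F"
    and "J \<subseteq> Delta r n"
    and "M_convex n J"
    and "\<not> (\<exists>J' (\<tau> :: nat \<Rightarrow> int).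
             J' \<subseteq> {\<alpha>. \<forall>i. \<alpha> i \<le> 1 \<and> (i \<ge> n \<longrightarrow> \<alpha> i = 0)} \<and> M_convex n J' \<and>
             (\<forall>i\<ge>n. \<tau> i = 0) \<and>
             (\<lambda>\<alpha> i. int (\<alpha> i)) ` J = (\<lambda>\<alpha> i. int (\<alpha> i) + \<tau> i) ` J')"
    and "\<exists>\<rho>. weak_rep F r n J \<rho>"
  shows "near_idempotent_tract F \<and>
         ((\<exists>i<n. delta_max J i - delta_min J i \<ge> 3) \<longrightarrow> idempotent_tract F)"
proof -
  obtain \<rho> where \<rho>: "weak_rep F r n J \<rho>"
    using assms(5) by blast
  obtain i where "i < n" "delta_min J i + 2 \<le> delta_max J i"
    using exists_wide_coordinate[OF assms(2-4)] .
  then have "near_idempotent_tract F"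
    by (rule weak_rep_wide_coordinate_near_idempotent[OF assms(1) \<rho> assms(2,3)])
  moreover have "idempotent_tract F" if "i < n" "delta_max J i - delta_min J i \<ge> 3" for i
    using weak_rep_wide_coordinate_idempotent[OF assms(1) \<rho> assms(2,3) that(1)] that(2) by simp
  ultimately show ?thesis
    by blast
qed

end
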